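(* Let $H<G$ be groups and $K$ a group. Then $\ast_{H\times K}(G\times K)$ embeds into $(\ast_H G)\times K$.
   Context: For a group $G$ and subgroup $H<G$, $\ast_H G$ denotes the amalgamated free product of countably infinitely many copies of $G$ over the common subgroup $H$ (each copy containing $H$ via the given inclusion). *)

theory Defs
  imports "HOL-Algebra.Algebra"
begin

text \<open>Amalgamated free product of countably infinitely many copies (indexed by nat)
of a group G over a subgroup H, given by the standard presentation:
words are lists of letters (i, g) with g in carrier G (letter g in the i-th copy);
the congruence is generated by the multiplication table of each copy,
the identity of each copy being trivial, and the identification of h in H
in copy i with h in copy j.\<close>

inductive amalg_rel :: "('a, 'b) monoid_scheme \<Rightarrow> 'a set \<Rightarrow> (nat \<times> 'a) list \<Rightarrow> (nat \<times> 'a) list \<Rightarrow> bool"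
  for G :: "('a, 'b) monoid_scheme" and H :: "'a set" where
  refl: "xs \<in> lists (UNIV \<times> carrier G) \<Longrightarrow> amalg_rel G H xs xs"
| sym: "amalg_rel G H xs ys \<Longrightarrow> amalg_rel G H ys xs"
| trans: "amalg_rel G H xs ys \<Longrightarrow> amalg_rel G H ys zs \<Longrightarrow> amalg_rel G H xs zs"
| append: "amalg_rel G H xs ys \<Longrightarrow> amalg_rel G H us vs \<Longrightarrow> amalg_rel G H (xs @ us) (ys @ vs)"
| mult: "g \<in> carrier G \<Longrightarrow> h \<in> carrier G \<Longrightarrow> amalg_rel G H [(i, g), (i, h)] [(i, g \<otimes>\<^bsub>G\<^esub> h)]"
| one: "amalg_rel G H [(i, \<one>\<^bsub>G\<^esub>)] []"
| amalg: "h \<in> H \<Longrightarrow> amalg_rel G H [(i, h)] [(j, h)]"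

definition amalg_class :: "('a, 'b) monoid_scheme \<Rightarrow> 'a set \<Rightarrow> (nat \<times> 'a) list \<Rightarrow> (nat \<times> 'a) list set"
  where "amalg_class G H xs = {ys. amalg_rel G H xs ys}"

definition amalg_prod :: "('a, 'b) monoid_scheme \<Rightarrow> 'a set \<Rightarrow> ((nat \<times> 'a) list set) monoid"
  where "amalg_prod G H =
    \<lparr> carrier = amalg_class G H ` lists (UNIV \<times> carrier G),
      monoid.mult = (\<lambda>A B. \<Union> {amalg_class G H (xs @ ys) | xs ys. xs \<in> A \<and> ys \<in> B}),
      monoid.one = amalg_class G H [] \<rparr>"

end

theory Submission
  imports Defs
begin

text \<open>Map a word over \<open>G \<times> K\<close> to the pair (class of its word of \<open>G\<close>-components, product of its
  \<open>K\<close>-components).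
  It is injective because every letter \<open>(1, k)\<close> lies in the amalgamated subgroup \<open>H \<times> K\<close>:
  it can be moved into copy 0 and past any letter \<open>(g, 1)\<close> of any copy, so every word is
  equivalent to the normal form \<open>(g\<^sub>1, 1) \<cdots> (g\<^sub>n, 1) (1, k)\<close>, which is determined by its image.\<close>

lemma amalg_rel_lists:
  assumes "monoid G" "H \<subseteq> carrier G" "amalg_rel G H xs ys"
  shows "xs \<in> lists (UNIV \<times> carrier G)" "ys \<in> lists (UNIV \<times> carrier G)"
  using assms(3)
  by (induction rule: amalg_rel.induct) (use assms(1,2) in \<open>auto simp: monoid.m_closed monoid.one_closed\<close>)

declare amalg_rel.trans [trans]

lemma amalg_rel_in_context:
  assumes "amalg_rel G H ys zs" "xs \<in> lists (UNIV \<times> carrier G)" "us \<in> lists (UNIV \<times> carrier G)"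
  shows "amalg_rel G H (xs @ ys @ us) (xs @ zs @ us)"
  using assms by (intro amalg_rel.append amalg_rel.refl) auto

lemma amalg_class_eq:
  assumes "amalg_rel G H xs ys"
  shows "amalg_class G H xs = amalg_class G H ys"
  using amalg_rel.trans[OF assms] amalg_rel.trans[OF amalg_rel.sym[OF assms]]
  by (auto simp: amalg_class_def)

lemma amalg_class_eq_iff:
  assumes "ys \<in> lists (UNIV \<times> carrier G)"
  shows "amalg_class G H xs = amalg_class G H ys \<longleftrightarrow> amalg_rel G H xs ys"
  using amalg_class_eq amalg_rel.refl[OF assms] by (fastforce simp: amalg_class_def)

lemma amalg_prod_mult_class:
  assumes "xs \<in> lists (UNIV \<times> carrier G)" "ys \<in> lists (UNIV \<times> carrier G)"
  shows "amalg_class G H xs \<otimes>\<^bsub>amalg_prod G H\<^esub> amalg_class G H ys = amalg_class G H (xs @ ys)"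
proof -
  have "{amalg_class G H (xs' @ ys') | xs' ys'. xs' \<in> amalg_class G H xs \<and> ys' \<in> amalg_class G H ys}
      = {amalg_class G H (xs @ ys)}" (is "?products = _")
  proof (intro equalityI subsetI)
    fix A assume "A \<in> ?products"
    then obtain xs' ys' where rel: "amalg_rel G H xs xs'" "amalg_rel G H ys ys'"
      and "A = amalg_class G H (xs' @ ys')"
      by (auto simp: amalg_class_def)
    then show "A \<in> {amalg_class G H (xs @ ys)}" using amalg_class_eq[OF amalg_rel.append[OF rel]] by simp
  next
    have "xs \<in> amalg_class G H xs" "ys \<in> amalg_class G H ys"
      using assms by (auto simp: amalg_class_def amalg_rel.refl)
    then show "A \<in> ?products" if "A \<in> {amalg_class G H (xs @ ys)}" for A
      using that by blast
  qed
  then show ?thesis by (simp add: amalg_prod_def)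
qed

definition amalg_induced :: "((nat \<times> 'a) list \<Rightarrow> 'm) \<Rightarrow> (nat \<times> 'a) list set \<Rightarrow> 'm"
  where "amalg_induced \<phi> A = \<phi> (SOME w. w \<in> A)"

lemma amalg_induced_class:
  assumes respects: "\<And>xs ys. amalg_rel G H xs ys \<Longrightarrow> \<phi> xs = \<phi> ys"
    and "xs \<in> lists (UNIV \<times> carrier G)"
  shows "amalg_induced \<phi> (amalg_class G H xs) = \<phi> xs"
proof -
  have "xs \<in> amalg_class G H xs" using assms(2) by (simp add: amalg_class_def amalg_rel.refl)
  then have "(SOME w. w \<in> amalg_class G H xs) \<in> amalg_class G H xs" by (rule someI)
  then have "amalg_rel G H xs (SOME w. w \<in> amalg_class G H xs)" by (simp add: amalg_class_def)
  then show ?thesis unfolding amalg_induced_def by (rule respects[symmetric])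
qed

lemma amalg_induced_hom:
  assumes respects: "\<And>xs ys. amalg_rel G H xs ys \<Longrightarrow> \<phi> xs = \<phi> ys"
    and closed: "\<And>xs. xs \<in> lists (UNIV \<times> carrier G) \<Longrightarrow> \<phi> xs \<in> carrier M"
    and mult: "\<And>xs ys. xs \<in> lists (UNIV \<times> carrier G) \<Longrightarrow> ys \<in> lists (UNIV \<times> carrier G)
                 \<Longrightarrow> \<phi> (xs @ ys) = \<phi> xs \<otimes>\<^bsub>M\<^esub> \<phi> ys"
  shows "amalg_induced \<phi> \<in> hom (amalg_prod G H) M"
proof (rule homI)
  fix A B assume "A \<in> carrier (amalg_prod G H)" "B \<in> carrier (amalg_prod G H)"
  then obtain xs ys where "xs \<in> lists (UNIV \<times> carrier G)" "A = amalg_class G H xs"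
      "ys \<in> lists (UNIV \<times> carrier G)" "B = amalg_class G H ys"
    by (auto simp: amalg_prod_def)
  then show "amalg_induced \<phi> A \<in> carrier M"
    "amalg_induced \<phi> (A \<otimes>\<^bsub>amalg_prod G H\<^esub> B) = amalg_induced \<phi> A \<otimes>\<^bsub>M\<^esub> amalg_induced \<phi> B"
    by (simp_all add: amalg_prod_mult_class amalg_induced_class[OF respects] closed mult)
qed

lemma amalg_induced_inj_on:
  assumes respects: "\<And>xs ys. amalg_rel G H xs ys \<Longrightarrow> \<phi> xs = \<phi> ys"
    and faithful: "\<And>xs ys. xs \<in> lists (UNIV \<times> carrier G) \<Longrightarrow> ys \<in> lists (UNIV \<times> carrier G)
                     \<Longrightarrow> \<phi> xs = \<phi> ys \<Longrightarrow> amalg_rel G H xs ys"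
  shows "inj_on (amalg_induced \<phi>) (carrier (amalg_prod G H))"
proof (rule inj_onI)
  fix A B assume "A \<in> carrier (amalg_prod G H)" "B \<in> carrier (amalg_prod G H)"
    and eq: "amalg_induced \<phi> A = amalg_induced \<phi> B"
  then obtain xs ys where xs: "xs \<in> lists (UNIV \<times> carrier G)" "A = amalg_class G H xs"
      and ys: "ys \<in> lists (UNIV \<times> carrier G)" "B = amalg_class G H ys"
    by (auto simp: amalg_prod_def)
  have "\<phi> xs = \<phi> ys"
    using eq amalg_induced_class[OF respects xs(1)] amalg_induced_class[OF respects ys(1)] xs(2) ys(2)
    by simp
  then show "A = B" using xs ys faithful amalg_class_eq by blast
qed

lemma map_apsnd_fst_lists [simp]:
  "w \<in> lists (UNIV \<times> carrier (G \<times>\<times> K)) \<Longrightarrow> map (apsnd fst) w \<in> lists (UNIV \<times> carrier G)"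
  by (induction w) auto

lemma amalg_rel_DirProd_fst:
  "amalg_rel (G \<times>\<times> K) (H \<times> carrier K) xs ys \<Longrightarrow>
     amalg_rel G H (map (apsnd fst) xs) (map (apsnd fst) ys)"
proof (induction rule: amalg_rel.induct)
  case (refl xs)
  then show ?case by (intro amalg_rel.refl map_apsnd_fst_lists)
next
  case (sym xs ys)
  show ?case by (rule amalg_rel.sym[OF sym.IH])
next
  case (trans xs ys zs)
  show ?case by (rule amalg_rel.trans[OF trans.IH])
next
  case (append xs ys us vs)
  show ?case using amalg_rel.append[OF append.IH] by simp
next
  case (mult g h i)
  then show ?case using amalg_rel.mult[of "fst g" G "fst h" H i] by (auto simp: mult_DirProd')
next
  case (one i)
  show ?case using amalg_rel.one[of G H i] by simp
next
  case (amalg h i j)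
  then show ?case using amalg_rel.amalg[of "fst h" H G i j] by auto
qed

lemma (in monoid) multlist_append:
  assumes "set xs \<subseteq> carrier G" "set ys \<subseteq> carrier G"
  shows "foldr (\<otimes>) (xs @ ys) \<one> = foldr (\<otimes>) xs \<one> \<otimes> foldr (\<otimes>) ys \<one>"
  using assms by (induction xs) (auto simp: m_assoc)

definition snd_prod :: "('c, 'd) monoid_scheme \<Rightarrow> (nat \<times> ('a \<times> 'c)) list \<Rightarrow> 'c"
  where "snd_prod K w = foldr (\<otimes>\<^bsub>K\<^esub>) (map (snd \<circ> snd) w) \<one>\<^bsub>K\<^esub>"

lemma snd_prod_simps [simp]:
  "snd_prod K [] = \<one>\<^bsub>K\<^esub>" "snd_prod K ((i, g, k) # w) = k \<otimes>\<^bsub>K\<^esub> snd_prod K w"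
  by (simp_all add: snd_prod_def)

lemma snd_prod_closed:
  "monoid K \<Longrightarrow> w \<in> lists (UNIV \<times> carrier (G \<times>\<times> K)) \<Longrightarrow> snd_prod K w \<in> carrier K"
  unfolding snd_prod_def by (intro monoid.multlist_closed) auto

lemma snd_prod_append:
  assumes "monoid K" "xs \<in> lists (UNIV \<times> carrier (G \<times>\<times> K))" "ys \<in> lists (UNIV \<times> carrier (G \<times>\<times> K))"
  shows "snd_prod K (xs @ ys) = snd_prod K xs \<otimes>\<^bsub>K\<^esub> snd_prod K ys"
proof -
  have "set (map (snd \<circ> snd) ws) \<subseteq> carrier K" if "ws \<in> lists (UNIV \<times> carrier (G \<times>\<times> K))" for ws
    using that by auto
  with assms show ?thesis
    unfolding snd_prod_def map_append by (intro monoid.multlist_append) auto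
qed

locale amalg_DirProd = G: monoid G + K: monoid K
  for G :: "('a, 'b) monoid_scheme" and K :: "('c, 'd) monoid_scheme" +
  fixes H :: "'a set"
  assumes H_subset: "H \<subseteq> carrier G" and one_in_H: "\<one>\<^bsub>G\<^esub> \<in> H"
begin

abbreviation R where "R \<equiv> amalg_rel (G \<times>\<times> K) (H \<times> carrier K)"
abbreviation embed where "embed \<equiv> map (apsnd (\<lambda>g. (g, \<one>\<^bsub>K\<^esub>)))"

lemma embed_lists [simp]:
  "u \<in> lists (UNIV \<times> carrier G) \<Longrightarrow> embed u \<in> lists (UNIV \<times> (carrier G \<times> carrier K))"
  by (induction u) auto

lemma amalg_rel_DirProd_snd_prod: "R xs ys \<Longrightarrow> snd_prod K xs = snd_prod K ys"
proof (induction rule: amalg_rel.induct)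
  case (append xs ys us vs)
  have "monoid (G \<times>\<times> K)" "H \<times> carrier K \<subseteq> carrier (G \<times>\<times> K)"
    using DirProd_monoid G.monoid_axioms K.monoid_axioms H_subset by auto
  then have "xs \<in> lists (UNIV \<times> carrier (G \<times>\<times> K))" "us \<in> lists (UNIV \<times> carrier (G \<times>\<times> K))"
      "ys \<in> lists (UNIV \<times> carrier (G \<times>\<times> K))" "vs \<in> lists (UNIV \<times> carrier (G \<times>\<times> K))"
    using amalg_rel_lists append.hyps by blast+
  then show ?case using append.IH by (simp add: snd_prod_append[OF K.monoid_axioms])
next
  case (mult g h i)
  then show ?case by (cases g, cases h) simp
next
  case (amalg h i j)
  then show ?case by (cases h) simp
qed simp_all

lemma amalg_rel_DirProd_embed: "amalg_rel G H xs ys \<Longrightarrow> R (embed xs) (embed ys)"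
proof (induction rule: amalg_rel.induct)
  case (refl xs)
  then show ?case by (intro amalg_rel.refl) simp
next
  case (sym xs ys)
  show ?case by (rule amalg_rel.sym[OF sym.IH])
next
  case (trans xs ys zs)
  show ?case by (rule amalg_rel.trans[OF trans.IH])
next
  case (append xs ys us vs)
  show ?case using amalg_rel.append[OF append.IH] by simp
next
  case (mult g h i)
  then show ?case using amalg_rel.mult[of "(g, \<one>\<^bsub>K\<^esub>)" "G \<times>\<times> K" "(h, \<one>\<^bsub>K\<^esub>)" "H \<times> carrier K" i] by simp
next
  case (one i)
  show ?case using amalg_rel.one[of "G \<times>\<times> K" "H \<times> carrier K" i] by simp
next
  case (amalg h i j)
  then show ?case by (simp add: amalg_rel.amalg)
qed

lemma amalg_rel_DirProd_move_K_letter: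
  assumes "xs \<in> lists (UNIV \<times> carrier (G \<times>\<times> K))" "us \<in> lists (UNIV \<times> carrier (G \<times>\<times> K))"
    and "k \<in> carrier K"
  shows "R (xs @ (i, \<one>\<^bsub>G\<^esub>, k) # us) (xs @ (j, \<one>\<^bsub>G\<^esub>, k) # us)"
  using amalg_rel_in_context[OF amalg_rel.amalg assms(1,2), of "(\<one>\<^bsub>G\<^esub>, k)"] assms(3) one_in_H
  by simp

lemma amalg_rel_DirProd_split_letter:
  assumes "g \<in> carrier G" "k \<in> carrier K"
  shows "R [(i, g, k)] [(i, g, \<one>\<^bsub>K\<^esub>), (0, \<one>\<^bsub>G\<^esub>, k)]"
proof -
  have "R [(i, g, k)] [(i, g, \<one>\<^bsub>K\<^esub>), (i, \<one>\<^bsub>G\<^esub>, k)]"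
    using amalg_rel.mult[of "(g, \<one>\<^bsub>K\<^esub>)" "G \<times>\<times> K" "(\<one>\<^bsub>G\<^esub>, k)" "H \<times> carrier K" i] assms
    by (simp add: amalg_rel.sym)
  also have "R \<dots> [(i, g, \<one>\<^bsub>K\<^esub>), (0, \<one>\<^bsub>G\<^esub>, k)]"
    using amalg_rel_DirProd_move_K_letter[of "[(i, g, \<one>\<^bsub>K\<^esub>)]" "[]"] assms by simp
  finally show ?thesis .
qed

lemma amalg_rel_DirProd_swap_letters:
  assumes "a \<in> carrier G" "k \<in> carrier K"
  shows "R [(0, \<one>\<^bsub>G\<^esub>, k), (j, a, \<one>\<^bsub>K\<^esub>)] [(j, a, \<one>\<^bsub>K\<^esub>), (0, \<one>\<^bsub>G\<^esub>, k)]"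
proof -
  have "R [(0, \<one>\<^bsub>G\<^esub>, k), (j, a, \<one>\<^bsub>K\<^esub>)] [(j, \<one>\<^bsub>G\<^esub>, k), (j, a, \<one>\<^bsub>K\<^esub>)]"
    using amalg_rel_DirProd_move_K_letter[of "[]" "[(j, a, \<one>\<^bsub>K\<^esub>)]"] assms by simp
  also have "R \<dots> [(j, a, k)]"
    using amalg_rel.mult[of "(\<one>\<^bsub>G\<^esub>, k)" "G \<times>\<times> K" "(a, \<one>\<^bsub>K\<^esub>)" "H \<times> carrier K" j] assms by simp
  also have "R \<dots> [(j, a, \<one>\<^bsub>K\<^esub>), (j, \<one>\<^bsub>G\<^esub>, k)]"
    using amalg_rel.mult[of "(a, \<one>\<^bsub>K\<^esub>)" "G \<times>\<times> K" "(\<one>\<^bsub>G\<^esub>, k)" "H \<times> carrier K" j] assms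
    by (simp add: amalg_rel.sym)
  also have "R \<dots> [(j, a, \<one>\<^bsub>K\<^esub>), (0, \<one>\<^bsub>G\<^esub>, k)]"
    using amalg_rel_DirProd_move_K_letter[of "[(j, a, \<one>\<^bsub>K\<^esub>)]" "[]"] assms by simp
  finally show ?thesis .
qed

lemma amalg_rel_DirProd_commute:
  assumes "k \<in> carrier K"
  shows "u \<in> lists (UNIV \<times> carrier G) \<Longrightarrow> R ((0, \<one>\<^bsub>G\<^esub>, k) # embed u) (embed u @ [(0, \<one>\<^bsub>G\<^esub>, k)])"
proof (induction u)
  case Nil
  show ?case using assms by (simp add: amalg_rel.refl)
next
  case (Cons x u)
  obtain j a where x: "x = (j, a)" and a: "a \<in> carrier G" and u: "u \<in> lists (UNIV \<times> carrier G)"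
    using Cons.prems by (cases x) auto
  have "R ([(0, \<one>\<^bsub>G\<^esub>, k), (j, a, \<one>\<^bsub>K\<^esub>)] @ embed u) ([(j, a, \<one>\<^bsub>K\<^esub>), (0, \<one>\<^bsub>G\<^esub>, k)] @ embed u)"
    using amalg_rel_in_context[OF amalg_rel_DirProd_swap_letters[OF a assms], of "[]" "embed u"] u
    by simp
  also have "R \<dots> ([(j, a, \<one>\<^bsub>K\<^esub>)] @ (embed u @ [(0, \<one>\<^bsub>G\<^esub>, k)]) @ [])"
    using amalg_rel_in_context[OF Cons.IH[OF u], of "[(j, a, \<one>\<^bsub>K\<^esub>)]" "[]"] a by simp
  finally show ?case using x by simp
qed

lemma amalg_rel_DirProd_normal_form:
  "w \<in> lists (UNIV \<times> carrier (G \<times>\<times> K)) \<Longrightarrow>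
     R w (embed (map (apsnd fst) w) @ [(0, \<one>\<^bsub>G\<^esub>, snd_prod K w)])"
proof (induction w)
  case Nil
  show ?case using amalg_rel.sym[OF amalg_rel.one[of "G \<times>\<times> K" "H \<times> carrier K" 0]] by simp
next
  case (Cons x w)
  obtain i g k where x: "x = (i, g, k)" and gk: "g \<in> carrier G" "k \<in> carrier K"
    and w: "w \<in> lists (UNIV \<times> carrier (G \<times>\<times> K))"
    using Cons.prems by (cases x) auto
  define u p where "u = map (apsnd fst) w" and "p = snd_prod K w"
  have u: "u \<in> lists (UNIV \<times> carrier G)" and p: "p \<in> carrier K"
    using w snd_prod_closed[OF K.monoid_axioms w] by (auto simp: u_def p_def)
  have "R (x # w) ([(i, g, \<one>\<^bsub>K\<^esub>), (0, \<one>\<^bsub>G\<^esub>, k)] @ embed u @ [(0, \<one>\<^bsub>G\<^esub>, p)])"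
    using amalg_rel.append[OF amalg_rel_DirProd_split_letter[OF gk] Cons.IH[OF w]]
    by (simp add: x u_def p_def)
  also have "\<dots> = [(i, g, \<one>\<^bsub>K\<^esub>)] @ ((0, \<one>\<^bsub>G\<^esub>, k) # embed u) @ [(0, \<one>\<^bsub>G\<^esub>, p)]"
    by simp
  also have "R \<dots> ([(i, g, \<one>\<^bsub>K\<^esub>)] @ (embed u @ [(0, \<one>\<^bsub>G\<^esub>, k)]) @ [(0, \<one>\<^bsub>G\<^esub>, p)])"
    using amalg_rel_in_context[OF amalg_rel_DirProd_commute[OF gk(2) u], of "[(i, g, \<one>\<^bsub>K\<^esub>)]"]
      gk p by simp
  also have "\<dots> = ((i, g, \<one>\<^bsub>K\<^esub>) # embed u) @ [(0, \<one>\<^bsub>G\<^esub>, k), (0, \<one>\<^bsub>G\<^esub>, p)] @ []"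
    by simp
  also have "R \<dots> (((i, g, \<one>\<^bsub>K\<^esub>) # embed u) @ [(0, \<one>\<^bsub>G\<^esub>, k \<otimes>\<^bsub>K\<^esub> p)] @ [])"
    using amalg_rel_in_context[OF amalg_rel.mult[of "(\<one>\<^bsub>G\<^esub>, k)" "G \<times>\<times> K" "(\<one>\<^bsub>G\<^esub>, p)" "H \<times> carrier K" 0],
        of "(i, g, \<one>\<^bsub>K\<^esub>) # embed u" "[]"]
      gk p u by simp
  finally show ?case by (simp add: x u_def p_def)
qed

lemma amalg_rel_DirProd_faithful:
  assumes xs: "xs \<in> lists (UNIV \<times> carrier (G \<times>\<times> K))" and ys: "ys \<in> lists (UNIV \<times> carrier (G \<times>\<times> K))"
    and fst_rel: "amalg_rel G H (map (apsnd fst) xs) (map (apsnd fst) ys)"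
    and snd_eq: "snd_prod K xs = snd_prod K ys"
  shows "R xs ys"
proof -
  have "R xs (embed (map (apsnd fst) xs) @ [(0, \<one>\<^bsub>G\<^esub>, snd_prod K ys)])"
    using amalg_rel_DirProd_normal_form[OF xs] snd_eq by simp
  also have "R \<dots> (embed (map (apsnd fst) ys) @ [(0, \<one>\<^bsub>G\<^esub>, snd_prod K ys)])"
    using amalg_rel_in_context[OF amalg_rel_DirProd_embed[OF fst_rel], of "[]"]
      snd_prod_closed[OF K.monoid_axioms ys] by simp
  also have "R \<dots> ys"
    using amalg_rel.sym[OF amalg_rel_DirProd_normal_form[OF ys]] .
  finally show ?thesis .
qed

end

theorem lemma2p4:
  fixes G :: "('a, 'b) monoid_scheme" and K :: "('c, 'd) monoid_scheme" and H :: "'a set"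
  assumes "group G" and "subgroup H G" and "group K"
  shows "\<exists>f. f \<in> hom (amalg_prod (G \<times>\<times> K) (H \<times> carrier K)) (amalg_prod G H \<times>\<times> K)
             \<and> inj_on f (carrier (amalg_prod (G \<times>\<times> K) (H \<times> carrier K)))"
proof -
  interpret amalg_DirProd G K H
    using assms by (simp add: amalg_DirProd_def amalg_DirProd_axioms_def group.is_monoid
        subgroup.subset subgroup.one_closed)
  define \<phi> where "\<phi> w = (amalg_class G H (map (apsnd fst) w), snd_prod K w)" for w
  have respects: "\<phi> xs = \<phi> ys" if "R xs ys" for xs ys
    using amalg_class_eq[OF amalg_rel_DirProd_fst[OF that]] amalg_rel_DirProd_snd_prod[OF that]
    by (simp add: \<phi>_def)
  have closed: "\<phi> xs \<in> carrier (amalg_prod G H \<times>\<times> K)"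
    if "xs \<in> lists (UNIV \<times> carrier (G \<times>\<times> K))" for xs
    using that snd_prod_closed[OF K.monoid_axioms that] by (auto simp: \<phi>_def amalg_prod_def)
  have mult: "\<phi> (xs @ ys) = \<phi> xs \<otimes>\<^bsub>amalg_prod G H \<times>\<times> K\<^esub> \<phi> ys"
    if "xs \<in> lists (UNIV \<times> carrier (G \<times>\<times> K))" "ys \<in> lists (UNIV \<times> carrier (G \<times>\<times> K))" for xs ys
    using that by (simp add: \<phi>_def amalg_prod_mult_class snd_prod_append[OF K.monoid_axioms])
  have faithful: "R xs ys" if "xs \<in> lists (UNIV \<times> carrier (G \<times>\<times> K))"
    "ys \<in> lists (UNIV \<times> carrier (G \<times>\<times> K))" "\<phi> xs = \<phi> ys" for xs ys
    using that(3) amalg_rel_DirProd_faithful[OF that(1,2)]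
      amalg_class_eq_iff[OF map_apsnd_fst_lists[OF that(2)]] by (simp add: \<phi>_def)
  show ?thesis
    using amalg_induced_hom[OF respects closed mult] amalg_induced_inj_on[OF respects faithful]
    by (intro exI conjI)
qed

end
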